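(* Let $r\in\mathbb{N}$, let $\Theta$ be a compact parameter set with $\theta^*\in\Theta$, and for each $\theta\in\Theta$ let $f_\theta:\mathbb{N}_0\times\mathbb{R}_+\to\mathbb{R}_+$ be measurable. Suppose there are non-negative constants $a,b$ with $a+b<1$ such that for all $(y,\lambda),(y',\lambda')\in\mathbb{N}_0\times\mathbb{R}_+$, $$\sup_{\theta\in\Theta}\big|f_\theta(y,\lambda)-f_\theta(y',\lambda')\big|\le a|y-y'|+b|\lambda-\lambda'|.$$ Let $\{(Y_t,\lambda_t)\}$ be the strictly stationary solution of $$Y_t\mid\mathcal{F}_{t-1}\sim NB(r,p_t),\qquad r\frac{1-p_t}{p_t}=\lambda_t=f_{\theta^*}(Y_{t-1},\lambda_{t-1}),$$ where $\mathcal{F}_{t-1}=\sigma(Y_{t-1},Y_{t-2},\dots)$. If $$(a+b)^2+\frac{a^2}{r}<1,$$ then $\mathbb{E}(Y_t^2)<\infty$ for all $t\in\mathbb{Z}$.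
   Context: $NB(r,p)$ denotes the negative binomial distribution with parameters $r$ and $p$, having mean $r(1-p)/p$ and variance $r(1-p)/p^2$. *)

theory Defs
  imports "HOL-Probability.Probability"
begin

definition past_sigma :: "'a measure \<Rightarrow> (int \<Rightarrow> 'a \<Rightarrow> nat) \<Rightarrow> int \<Rightarrow> 'a measure" where
  "past_sigma M Y t = sigma (space M) {Y s -` A \<inter> space M | s A. s \<le> t - 1}"

text \<open>Success probability p_t determined by r (1 - p_t)/p_t = lambda_t.\<close>
definition nb_prob :: "nat \<Rightarrow> real \<Rightarrow> real" where
  "nb_prob r l = real r / (real r + l)"

definition strictly_stationary ::
  "'a measure \<Rightarrow> (int \<Rightarrow> 'a \<Rightarrow> nat) \<Rightarrow> (int \<Rightarrow> 'a \<Rightarrow> real) \<Rightarrow> bool" where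
  "strictly_stationary M Y L \<longleftrightarrow>
     (\<forall>h::int.
        distr M (PiM UNIV (\<lambda>_. count_space UNIV \<Otimes>\<^sub>M borel)) (\<lambda>\<omega> i. (Y (i + h) \<omega>, L (i + h) \<omega>))
      = distr M (PiM UNIV (\<lambda>_. count_space UNIV \<Otimes>\<^sub>M borel)) (\<lambda>\<omega> i. (Y i \<omega>, L i \<omega>)))"

end

theory Submission
  imports Defs
begin

text \<open>
  Write \<open>\<lambda>\<^sub>t\<close> for the intensity \<open>L t\<close>. Conditionally on the past, \<open>Y\<^sub>t\<close> is negative binomial
  with mean \<open>\<lambda>\<^sub>t\<close> and variance \<open>\<lambda>\<^sub>t + \<lambda>\<^sub>t\<^sup>2 / r\<close>, and the Lipschitz condition gives
  \<open>\<lambda>\<^sub>t\<^sub>+\<^sub>1 \<le> c + a Y\<^sub>t + b \<lambda>\<^sub>t\<close> with \<open>c = f(0, 0)\<close>. Hence for every event \<open>A\<close> of the past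
  the truncated moments \<open>m\<^sub>1 = E[1\<^sub>A \<lambda>\<^sub>t]\<close> and \<open>m\<^sub>2 = E[1\<^sub>A \<lambda>\<^sub>t\<^sup>2]\<close> satisfy
  \<open>m\<^sub>1' \<le> c + (a + b) m\<^sub>1\<close> and \<open>m\<^sub>2' \<le> c\<^sup>2 + (2c(a + b) + a\<^sup>2) m\<^sub>1 + ((a + b)\<^sup>2 + a\<^sup>2/r) m\<^sub>2\<close>,
  a linear recursion that forgets its initial values geometrically. Taking
  \<open>A = {\<lambda>\<^sub>t\<^sub>-\<^sub>n \<le> R}\<close>, whose complement is small uniformly in \<open>n\<close> by stationarity, bounds
  \<open>E[min(\<lambda>\<^sub>t\<^sup>2, N)]\<close> independently of \<open>N\<close>; finally \<open>E[Y\<^sub>t\<^sup>2] = E[\<lambda>\<^sub>t\<^sup>2 + \<lambda>\<^sub>t + \<lambda>\<^sub>t\<^sup>2/r]\<close>.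
\<close>

abbreviation nb_mean_pmf :: "nat \<Rightarrow> real \<Rightarrow> nat pmf" where
  "nb_mean_pmf r l \<equiv> neg_binomial_pmf r (nb_prob r l)"

lemma Suc_times_binomial_add_Suc: "Suc j * (j + n choose Suc j) = n * (j + n choose j)"
  by (metis binomial_absorption binomial_absorb_comp add_diff_cancel_left')

lemma pmf_neg_binomial_Suc_times:
  assumes p: "p \<in> {0<..1}"
  shows "real (Suc j) * pmf (neg_binomial_pmf n p) (Suc j)
       = real n * ((1 - p) / p) * pmf (neg_binomial_pmf (Suc n) p) j"
proof -
  have binom: "real (Suc j) * real (j + n choose Suc j) = real n * real (j + n choose j)"
    by (metis Suc_times_binomial_add_Suc of_nat_mult)
  have "real (Suc j) * pmf (neg_binomial_pmf n p) (Suc j)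
      = real (Suc j) * real (j + n choose Suc j) * p ^ n * (1 - p) ^ Suc j"
    using p by (simp add: pmf_neg_binomial)
  also have "\<dots> = real n * real (j + n choose j) * p ^ n * (1 - p) ^ Suc j"
    by (simp only: binom)
  also have "\<dots> = real n * ((1 - p) / p) * pmf (neg_binomial_pmf (Suc n) p) j"
    using p by (simp add: pmf_neg_binomial)
  finally show ?thesis .
qed

lemma suminf_ennreal_Suc:
  fixes g :: "nat \<Rightarrow> ennreal"
  assumes "g 0 = 0"
  shows "suminf g = (\<Sum>j. g (Suc j))"
  using sums_Suc[OF summable_sums[OF summableI, of "\<lambda>j. g (Suc j)"]] assms
  by (simp add: sums_iff)

lemma nn_integral_neg_binomial_pmf_square:
  assumes p: "p \<in> {0<..1}"
  shows "(\<integral>\<^sup>+k. ennreal ((real k)\<^sup>2) \<partial>neg_binomial_pmf n p)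
       = ennreal (real n * ((1 - p) / p) * (1 + real (Suc n) * ((1 - p) / p)))"
proof -
  define q where "q = (1 - p) / p"
  have q: "0 \<le> q" using p by (simp add: q_def)
  have "(\<integral>\<^sup>+k. ennreal ((real k)\<^sup>2) \<partial>neg_binomial_pmf n p)
      = (\<Sum>k. ennreal (pmf (neg_binomial_pmf n p) k * (real k)\<^sup>2))"
    by (simp add: nn_integral_measure_pmf nn_integral_count_space_nat ennreal_mult'')
  also have "\<dots> = (\<Sum>j. ennreal (pmf (neg_binomial_pmf n p) (Suc j) * (real (Suc j))\<^sup>2))"
    by (rule suminf_ennreal_Suc) simp
  also have "\<dots> = (\<Sum>j. ennreal (real n * q) * ennreal (pmf (neg_binomial_pmf (Suc n) p) j * (real j + 1)))"
  proof (rule suminf_cong)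
    fix j
    have "pmf (neg_binomial_pmf n p) (Suc j) * (real (Suc j))\<^sup>2
        = (real (Suc j) * pmf (neg_binomial_pmf n p) (Suc j)) * (real j + 1)"
      by (simp add: power2_eq_square)
    also have "\<dots> = real n * q * (pmf (neg_binomial_pmf (Suc n) p) j * (real j + 1))"
      by (simp only: pmf_neg_binomial_Suc_times[OF p] q_def mult.assoc)
    finally show "ennreal (pmf (neg_binomial_pmf n p) (Suc j) * (real (Suc j))\<^sup>2)
        = ennreal (real n * q) * ennreal (pmf (neg_binomial_pmf (Suc n) p) j * (real j + 1))"
      using q by (simp add: ennreal_mult)
  qed
  also have "\<dots> = ennreal (real n * q) * (\<Sum>j. ennreal (pmf (neg_binomial_pmf (Suc n) p) j * (real j + 1)))"
    by (rule ennreal_suminf_cmult)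
  also have "(\<Sum>j. ennreal (pmf (neg_binomial_pmf (Suc n) p) j * (real j + 1)))
      = (\<integral>\<^sup>+j. ennreal (real j) + 1 \<partial>neg_binomial_pmf (Suc n) p)"
    by (simp add: nn_integral_measure_pmf nn_integral_count_space_nat ennreal_mult'')
  also have "(\<integral>\<^sup>+j. ennreal (real j) + 1 \<partial>neg_binomial_pmf (Suc n) p) = ennreal (real (Suc n) * q) + 1"
  proof -
    have "(\<integral>\<^sup>+j. ennreal (real j) \<partial>neg_binomial_pmf (Suc n) p) = ennreal (real (Suc n) * q)"
      using nn_integral_neg_binomial_pmf_real[OF p, of "Suc n"]
      by (simp add: q_def ennreal_of_nat_eq_real_of_nat[symmetric] del: of_nat_Suc)
    then show ?thesis
      by (simp add: nn_integral_add)
  qed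
  also have "ennreal (real n * q) * (ennreal (real (Suc n) * q) + 1)
      = ennreal (real n * q * (1 + real (Suc n) * q))"
    using q by (subst ennreal_mult) (auto simp: add.commute)
  finally show ?thesis
    unfolding q_def .
qed

lemma nb_prob_in_unit:
  assumes "0 < r" "0 \<le> l"
  shows "nb_prob r l \<in> {0<..1}"
  using assms by (simp add: nb_prob_def field_simps)

lemma nb_prob_odds:
  assumes "0 < r" "0 \<le> l"
  shows "(1 - nb_prob r l) / nb_prob r l = l / r"
proof -
  have "real r + l > 0" using assms by simp
  then show ?thesis using assms by (simp add: nb_prob_def divide_simps)
qed

lemma nn_integral_nb_mean_pmf:
  assumes "0 < r" "0 \<le> l"
  shows "(\<integral>\<^sup>+k. ennreal (real k) \<partial>nb_mean_pmf r l) = ennreal l"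
proof -
  have "real r * ((1 - nb_prob r l) / nb_prob r l) = l"
    using nb_prob_odds[OF assms] assms by simp
  then show ?thesis
    using nn_integral_neg_binomial_pmf_real[OF nb_prob_in_unit[OF assms], of r]
    by (simp add: ennreal_of_nat_eq_real_of_nat[symmetric])
qed

lemma nn_integral_nb_mean_pmf_square:
  assumes "0 < r" "0 \<le> l"
  shows "(\<integral>\<^sup>+k. ennreal ((real k)\<^sup>2) \<partial>nb_mean_pmf r l) = ennreal (l\<^sup>2 + (l + l\<^sup>2 / r))"
  using nn_integral_neg_binomial_pmf_square[OF nb_prob_in_unit[OF assms], of r] nb_prob_odds[OF assms] assms
  by (simp add: field_simps power2_eq_square)

lemma nn_integral_nb_mean_pmf_affine:
  assumes "0 < r" "0 \<le> l" "0 \<le> u" "0 \<le> a"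
  shows "(\<integral>\<^sup>+k. ennreal (u + a * real k) \<partial>nb_mean_pmf r l) = ennreal (u + a * l)"
  using assms
  by (simp add: ennreal_mult nn_integral_add nn_integral_cmult nn_integral_nb_mean_pmf)

lemma nn_integral_nb_mean_pmf_affine_square:
  assumes "0 < r" "0 \<le> l" "0 \<le> u" "0 \<le> a"
  shows "(\<integral>\<^sup>+k. ennreal ((u + a * real k)\<^sup>2) \<partial>nb_mean_pmf r l)
       = ennreal ((u + a * l)\<^sup>2 + a\<^sup>2 * (l + l\<^sup>2 / r))"
proof -
  have "(\<integral>\<^sup>+k. ennreal ((u + a * real k)\<^sup>2) \<partial>nb_mean_pmf r l)
      = (\<integral>\<^sup>+k. ennreal (u\<^sup>2) + ennreal (2 * u * a) * ennreal (real k)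
           + ennreal (a\<^sup>2) * ennreal ((real k)\<^sup>2) \<partial>nb_mean_pmf r l)"
  proof (rule nn_integral_cong)
    fix k :: nat
    have "(u + a * real k)\<^sup>2 = u\<^sup>2 + 2 * u * a * real k + a\<^sup>2 * (real k)\<^sup>2"
      by (simp add: power2_sum power_mult_distrib)
    then show "ennreal ((u + a * real k)\<^sup>2) = ennreal (u\<^sup>2) + ennreal (2 * u * a) * ennreal (real k)
           + ennreal (a\<^sup>2) * ennreal ((real k)\<^sup>2)"
      using assms by (simp add: ennreal_mult[symmetric])
  qed
  also have "\<dots> = ennreal (u\<^sup>2) + ennreal (2 * u * a) * ennreal l + ennreal (a\<^sup>2) * ennreal (l\<^sup>2 + (l + l\<^sup>2 / r))"
    using assms by (simp add: nn_integral_add nn_integral_cmult nn_integral_nb_mean_pmf nn_integral_nb_mean_pmf_square)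
  also have "\<dots> = ennreal ((u + a * l)\<^sup>2 + a\<^sup>2 * (l + l\<^sup>2 / r))"
    using assms by (simp add: ennreal_mult[symmetric] ennreal_plus[symmetric] power2_sum algebra_simps
        del: ennreal_plus)
  finally show ?thesis .
qed

lemma ennreal_two_moment_recursion_le:
  fixes m1 m2 :: "nat \<Rightarrow> ennreal" and c1 c2 \<alpha> \<delta> \<rho> q R1 R2 :: real
  assumes nonneg: "0 \<le> c1" "0 \<le> c2" "0 \<le> \<alpha>" "0 \<le> \<delta>" "0 \<le> \<rho>" "0 \<le> R1" "0 \<le> R2"
    and q: "\<alpha> \<le> q" "\<rho> < q" "q < 1"
    and init: "m1 0 \<le> ennreal R1" "m2 0 \<le> ennreal R2"
    and step1: "\<And>j. m1 (Suc j) \<le> ennreal c1 + ennreal \<alpha> * m1 j"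
    and step2: "\<And>j. m2 (Suc j) \<le> ennreal c2 + ennreal \<delta> * m1 j + ennreal \<rho> * m2 j"
  shows "m2 n \<le> ennreal (q ^ n * (R2 + \<delta> * R1 / (q - \<rho>)) + (c2 + \<delta> * (c1 / (1 - \<alpha>))) / (1 - \<rho>))"
proof -
  define C1 where "C1 = c1 / (1 - \<alpha>)"
  define B where "B = R2 + \<delta> * R1 / (q - \<rho>)"
  define C2 where "C2 = (c2 + \<delta> * C1) / (1 - \<rho>)"
  have "0 \<le> C1" "0 \<le> C2" "R2 \<le> B" "0 \<le> q"
    using nonneg q by (simp_all add: C1_def C2_def B_def)
  have C1_fix: "c1 + \<alpha> * C1 = C1"
    using q by (simp add: C1_def field_simps)
  have C2_fix: "c2 + \<delta> * C1 + \<rho> * C2 = C2"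
    using q by (simp add: C2_def field_simps)
  \<comment> \<open>\<open>B\<close> is chosen to make \<open>q ^ n * B + C2\<close> an invariant of the second recursion\<close>
  have "(q - \<rho>) * B = (q - \<rho>) * R2 + \<delta> * R1"
    using q by (simp add: B_def field_simps)
  moreover have "0 \<le> (q - \<rho>) * R2"
    using q nonneg by simp
  ultimately have B_step: "\<delta> * R1 + \<rho> * B \<le> q * B"
    by (simp only: left_diff_distrib)
  have "m1 n \<le> ennreal (q ^ n * R1 + C1) \<and> m2 n \<le> ennreal (q ^ n * B + C2)"
  proof (induction n)
    case 0
    have "ennreal R1 \<le> ennreal (q ^ 0 * R1 + C1)" "ennreal R2 \<le> ennreal (q ^ 0 * B + C2)"
      using \<open>0 \<le> C1\<close> \<open>0 \<le> C2\<close> \<open>R2 \<le> B\<close> by (simp_all add: ennreal_leI)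
    then show ?case
      using init order_trans by blast
  next
    case (Suc n)
    have qnR1: "0 \<le> q ^ n * R1" and qnB: "0 \<le> q ^ n * B"
      using \<open>0 \<le> q\<close> nonneg \<open>R2 \<le> B\<close> by simp_all
    have "m1 (Suc n) \<le> ennreal c1 + ennreal \<alpha> * ennreal (q ^ n * R1 + C1)"
      using Suc.IH step1[of n] by (meson add_left_mono mult_left_mono order_trans zero_le)
    also have "\<dots> = ennreal (c1 + \<alpha> * (q ^ n * R1 + C1))"
      using nonneg qnR1 \<open>0 \<le> C1\<close> by (simp add: ennreal_mult)
    also have "\<dots> \<le> ennreal (q ^ Suc n * R1 + C1)"
      using C1_fix mult_right_mono[OF q(1) qnR1] by (intro ennreal_leI) (simp add: algebra_simps)
    finally have m1: "m1 (Suc n) \<le> ennreal (q ^ Suc n * R1 + C1)" .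
    have "m2 (Suc n) \<le> ennreal c2 + ennreal \<delta> * ennreal (q ^ n * R1 + C1) + ennreal \<rho> * ennreal (q ^ n * B + C2)"
      using Suc.IH step2[of n] by (meson add_mono add_left_mono mult_left_mono order_trans order_refl zero_le)
    also have "\<dots> = ennreal (c2 + \<delta> * (q ^ n * R1 + C1) + \<rho> * (q ^ n * B + C2))"
      using nonneg qnR1 qnB \<open>0 \<le> C1\<close> \<open>0 \<le> C2\<close> by (simp add: ennreal_mult)
    also have "\<dots> \<le> ennreal (q ^ Suc n * B + C2)"
    proof (rule ennreal_leI)
      have "q ^ n * (\<delta> * R1 + \<rho> * B) \<le> q ^ n * (q * B)"
        using B_step \<open>0 \<le> q\<close> by (simp add: mult_left_mono)
      then show "c2 + \<delta> * (q ^ n * R1 + C1) + \<rho> * (q ^ n * B + C2) \<le> q ^ Suc n * B + C2"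
        using C2_fix by (simp add: algebra_simps)
    qed
    finally show ?case using m1 by simp
  qed
  then show ?thesis
    by (simp add: B_def C1_def C2_def)
qed

lemma (in prob_space) nn_integral_le_if_bounded_off_small_sets:
  fixes f :: "'a \<Rightarrow> ennreal"
  assumes f: "f \<in> borel_measurable M"
    and small: "\<And>\<epsilon>. 0 < \<epsilon> \<Longrightarrow> \<exists>A\<in>sets M. prob (space M - A) < \<epsilon> \<and> (\<integral>\<^sup>+x. indicator A x * f x \<partial>M) \<le> C"
  shows "(\<integral>\<^sup>+x. f x \<partial>M) \<le> C + 1"
proof -
  have trunc: "(\<integral>\<^sup>+x. min (f x) (of_nat N) \<partial>M) \<le> C + 1" for N :: nat
  proof -
    obtain A where A: "A \<in> sets M" "prob (space M - A) < 1 / (real N + 1)"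
      and bound: "(\<integral>\<^sup>+x. indicator A x * f x \<partial>M) \<le> C"
      using small[of "1 / (real N + 1)"] by auto
    have "(\<integral>\<^sup>+x. min (f x) (of_nat N) \<partial>M)
        \<le> (\<integral>\<^sup>+x. indicator A x * f x + of_nat N * indicator (space M - A) x \<partial>M)"
      by (intro nn_integral_mono) (auto split: split_indicator)
    also have "\<dots> = (\<integral>\<^sup>+x. indicator A x * f x \<partial>M) + of_nat N * emeasure M (space M - A)"
      using A f by (simp add: nn_integral_add nn_integral_cmult_indicator)
    also have "\<dots> \<le> C + ennreal (real N * prob (space M - A))"
      using bound by (intro add_mono) (simp_all add: emeasure_eq_measure ennreal_mult ennreal_of_nat_eq_real_of_nat)
    also have "\<dots> \<le> C + 1"
    proof -
      have "real N * prob (space M - A) \<le> real N * (1 / (real N + 1))"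
        using A(2) by (intro mult_left_mono) simp_all
      also have "\<dots> \<le> 1" by (simp add: field_simps)
      finally show ?thesis by (intro add_left_mono) simp
    qed
    finally show ?thesis .
  qed
  have "(\<integral>\<^sup>+x. f x \<partial>M) = (\<integral>\<^sup>+x. (SUP N. min (f x) (of_nat N)) \<partial>M)"
    by (simp add: inf_SUP[symmetric] inf_min[symmetric] ennreal_SUP_of_nat_eq_top)
  also have "\<dots> = (SUP N. \<integral>\<^sup>+x. min (f x) (of_nat N) \<partial>M)"
    using f by (intro nn_integral_monotone_convergence_SUP) (auto simp: incseq_def le_fun_def intro!: min.coboundedI2)
  also have "\<dots> \<le> C + 1"
    using trunc by (rule SUP_least)
  finally show ?thesis .
qed

lemma (in real_distribution) measure_greaterThan_tendsto_0:
  "((\<lambda>x. measure M {x<..}) \<longlongrightarrow> 0) at_top"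
proof -
  have "measure M {x<..} = 1 - cdf M x" for x
    using prob_compl[of "{..x}"] by (simp add: cdf_def2 Compl_eq_Diff_UNIV[symmetric])
  then show ?thesis
    using tendsto_diff[OF tendsto_const cdf_lim_at_top_prob, of 1] by simp
qed

lemma strictly_stationary_distr_eq:
  assumes "strictly_stationary M Y L"
    and Y: "\<And>t. Y t \<in> measurable M (count_space UNIV)"
    and L: "\<And>t. L t \<in> borel_measurable M"
  shows "distr M borel (L t) = distr M borel (L 0)"
proof -
  let ?N = "PiM (UNIV :: int set) (\<lambda>_. count_space (UNIV :: nat set) \<Otimes>\<^sub>M (borel :: real measure))"
  have path: "(\<lambda>\<omega> i. (Y (i + h) \<omega>, L (i + h) \<omega>)) \<in> measurable M ?N" for h
    using Y L by (intro measurable_PiM_single') (auto simp: space_pair_measure)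
  have shifted: "distr M borel (L h) = distr (distr M ?N (\<lambda>\<omega> i. (Y (i + h) \<omega>, L (i + h) \<omega>))) borel (\<lambda>x. snd (x 0))"
    for h
    by (subst distr_distr[OF _ path]) (simp_all add: comp_def)
  have "distr M ?N (\<lambda>\<omega> i. (Y (i + t) \<omega>, L (i + t) \<omega>)) = distr M ?N (\<lambda>\<omega> i. (Y i \<omega>, L i \<omega>))"
    using assms(1) unfolding strictly_stationary_def by blast
  then show ?thesis
    using shifted[of t] shifted[of 0] by simp
qed

locale nb_count_process = prob_space M for M :: "'a measure" +
  fixes Y :: "int \<Rightarrow> 'a \<Rightarrow> nat" and L :: "int \<Rightarrow> 'a \<Rightarrow> real" and r :: nat
  assumes r_pos: "0 < r"
    and Y_measurable: "\<And>t. Y t \<in> measurable M (count_space UNIV)"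
    and L_nonneg: "\<And>t \<omega>. \<omega> \<in> space M \<Longrightarrow> 0 \<le> L t \<omega>"
    and L_past: "\<And>t. L t \<in> borel_measurable (past_sigma M Y t)"
    and cond_NB: "\<And>t k A. A \<in> sets (past_sigma M Y t) \<Longrightarrow>
         measure M ({\<omega> \<in> space M. Y t \<omega> = k} \<inter> A)
           = (\<integral>\<omega>. indicator A \<omega> * pmf (nb_mean_pmf r (L t \<omega>)) k \<partial>M)"
begin

lemma past_sigma_generators: "{Y s -` A \<inter> space M | s A. s \<le> t - 1} \<subseteq> sets M"
  using Y_measurable by (auto simp: measurable_def)

lemma space_past_sigma [simp]: "space (past_sigma M Y t) = space M"
  unfolding past_sigma_def using past_sigma_generators sets.sets_into_space
  by (intro space_measure_of) blast

lemma sets_past_sigma: "sets (past_sigma M Y t) = sigma_sets (space M) {Y s -` A \<inter> space M | s A. s \<le> t - 1}"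
  unfolding past_sigma_def using past_sigma_generators sets.sets_into_space
  by (intro sets_measure_of) blast

lemma subalgebra_past_sigma: "subalgebra M (past_sigma M Y t)"
  unfolding subalgebra_def sets_past_sigma
  using sets.sigma_sets_subset[OF past_sigma_generators] by simp

lemma sets_past_sigma_subset: "A \<in> sets (past_sigma M Y t) \<Longrightarrow> A \<in> sets M"
  using subalgebra_past_sigma by (auto simp: subalgebra_def)

lemma sets_past_sigma_mono: "s \<le> t \<Longrightarrow> sets (past_sigma M Y s) \<subseteq> sets (past_sigma M Y t)"
  unfolding sets_past_sigma by (rule sigma_sets_subseteq) force

lemma L_measurable [measurable]: "L t \<in> borel_measurable M"
  using measurable_from_subalg[OF subalgebra_past_sigma L_past] .

lemma pmf_nb_mean_pmf_L_measurable:
  "(\<lambda>\<omega>. pmf (nb_mean_pmf r (L t \<omega>)) k) \<in> borel_measurable (past_sigma M Y t)"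
proof -
  have "(\<lambda>\<omega>. real ((k + r - 1) choose k) * nb_prob r (L t \<omega>) ^ r * (1 - nb_prob r (L t \<omega>)) ^ k)
      \<in> borel_measurable (past_sigma M Y t)"
    unfolding nb_prob_def using L_past[of t] by measurable
  then show ?thesis
    by (rule measurable_cong[THEN iffD1, rotated])
       (use pmf_neg_binomial[OF nb_prob_in_unit[OF r_pos L_nonneg]] in simp)
qed

lemma nn_integral_indicator_Y_eq:
  assumes Z: "Z \<in> borel_measurable (past_sigma M Y t)"
  shows "(\<integral>\<^sup>+\<omega>. indicator {\<omega> \<in> space M. Y t \<omega> = k} \<omega> * Z \<omega> \<partial>M)
       = (\<integral>\<^sup>+\<omega>. ennreal (pmf (nb_mean_pmf r (L t \<omega>)) k) * Z \<omega> \<partial>M)"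
proof -
  let ?F = "past_sigma M Y t" and ?Yk = "{\<omega> \<in> space M. Y t \<omega> = k}"
  let ?p = "\<lambda>\<omega>. pmf (nb_mean_pmf r (L t \<omega>)) k"
  have Yk: "?Yk \<in> sets M"
    using Y_measurable[of t] by measurable
  have p: "?p \<in> borel_measurable M"
    using measurable_from_subalg[OF subalgebra_past_sigma pmf_nb_mean_pmf_L_measurable] .
  have sub: "subalgebra (density M g) ?F" for g
    using subalgebra_past_sigma by (simp add: subalgebra_def)
  \<comment> \<open>\<open>cond_NB\<close> says exactly that the two densities agree on the past \<sigma>-algebra\<close>
  have "restr_to_subalg (density M (indicator ?Yk)) ?F = restr_to_subalg (density M ?p) ?F"
  proof (rule measure_eqI)
    fix A assume "A \<in> sets (restr_to_subalg (density M (indicator ?Yk)) ?F)"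
    then have A: "A \<in> sets ?F"
      by (simp add: sets_restr_to_subalg[OF sub])
    then have AM: "A \<in> sets M"
      by (rule sets_past_sigma_subset)
    have int: "integrable M (\<lambda>\<omega>. indicator A \<omega> * ?p \<omega>)"
      using AM p by (intro integrable_const_bound[where B = 1]) (auto simp: pmf_le_1 split: split_indicator)
    have "emeasure (density M (indicator ?Yk)) A = (\<integral>\<^sup>+\<omega>. indicator (?Yk \<inter> A) \<omega> \<partial>M)"
      using AM Yk by (simp add: emeasure_density indicator_inter_arith)
    also have "\<dots> = emeasure M (?Yk \<inter> A)"
      using AM Yk by simp
    also have "\<dots> = ennreal (\<integral>\<omega>. indicator A \<omega> * ?p \<omega> \<partial>M)"
      using cond_NB[OF A] by (simp add: emeasure_eq_measure)
    also have "\<dots> = (\<integral>\<^sup>+\<omega>. ennreal (indicator A \<omega> * ?p \<omega>) \<partial>M)"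
      by (rule nn_integral_eq_integral[OF int, symmetric]) simp
    also have "\<dots> = (\<integral>\<^sup>+\<omega>. ennreal (?p \<omega>) * indicator A \<omega> \<partial>M)"
      by (intro nn_integral_cong) (simp split: split_indicator)
    also have "\<dots> = emeasure (density M ?p) A"
      using AM p by (simp add: emeasure_density)
    finally show "emeasure (restr_to_subalg (density M (indicator ?Yk)) ?F) A
        = emeasure (restr_to_subalg (density M ?p) ?F) A"
      using A by (simp add: emeasure_restr_to_subalg[OF sub])
  qed (simp add: sets_restr_to_subalg[OF sub])
  then have "(\<integral>\<^sup>+\<omega>. Z \<omega> \<partial>density M (indicator ?Yk)) = (\<integral>\<^sup>+\<omega>. Z \<omega> \<partial>density M ?p)"
    using nn_integral_subalgebra2[OF sub Z] by metis
  then show ?thesis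
    using Yk p Z measurable_from_subalg[OF subalgebra_past_sigma Z] by (simp add: nn_integral_density)
qed

lemma nn_integral_comp_Y:
  assumes H: "\<And>k. H k \<in> borel_measurable (past_sigma M Y t)"
  shows "(\<integral>\<^sup>+\<omega>. H (Y t \<omega>) \<omega> \<partial>M) = (\<integral>\<^sup>+\<omega>. (\<integral>\<^sup>+k. H k \<omega> \<partial>nb_mean_pmf r (L t \<omega>)) \<partial>M)"
proof -
  have HM: "H k \<in> borel_measurable M" for k
    using measurable_from_subalg[OF subalgebra_past_sigma H] .
  have p: "(\<lambda>\<omega>. pmf (nb_mean_pmf r (L t \<omega>)) k) \<in> borel_measurable M" for k
    using measurable_from_subalg[OF subalgebra_past_sigma pmf_nb_mean_pmf_L_measurable] .
  have Yk: "{\<omega> \<in> space M. Y t \<omega> = k} \<in> sets M" for k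
    using Y_measurable[of t] by measurable
  have "(\<integral>\<^sup>+\<omega>. H (Y t \<omega>) \<omega> \<partial>M) = (\<integral>\<^sup>+\<omega>. (\<Sum>k. indicator {\<omega> \<in> space M. Y t \<omega> = k} \<omega> * H k \<omega>) \<partial>M)"
  proof (rule nn_integral_cong)
    fix \<omega> assume "\<omega> \<in> space M"
    then have "(\<Sum>k. indicator {\<omega> \<in> space M. Y t \<omega> = k} \<omega> * H k \<omega>)
        = (\<Sum>k\<in>{Y t \<omega>}. indicator {\<omega> \<in> space M. Y t \<omega> = k} \<omega> * H k \<omega>)"
      by (intro suminf_finite) auto
    with \<open>\<omega> \<in> space M\<close> show "H (Y t \<omega>) \<omega> = (\<Sum>k. indicator {\<omega> \<in> space M. Y t \<omega> = k} \<omega> * H k \<omega>)"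
      by simp
  qed
  also have "\<dots> = (\<Sum>k. \<integral>\<^sup>+\<omega>. indicator {\<omega> \<in> space M. Y t \<omega> = k} \<omega> * H k \<omega> \<partial>M)"
    using HM Yk Y_measurable by (intro nn_integral_suminf) measurable
  also have "\<dots> = (\<Sum>k. \<integral>\<^sup>+\<omega>. ennreal (pmf (nb_mean_pmf r (L t \<omega>)) k) * H k \<omega> \<partial>M)"
    using nn_integral_indicator_Y_eq[OF H] by simp
  also have "\<dots> = (\<integral>\<^sup>+\<omega>. (\<Sum>k. ennreal (pmf (nb_mean_pmf r (L t \<omega>)) k) * H k \<omega>) \<partial>M)"
    using HM p by (intro nn_integral_suminf[symmetric]) measurable
  also have "\<dots> = (\<integral>\<^sup>+\<omega>. (\<integral>\<^sup>+k. H k \<omega> \<partial>nb_mean_pmf r (L t \<omega>)) \<partial>M)"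
    by (simp add: nn_integral_measure_pmf nn_integral_count_space_nat)
  finally show ?thesis .
qed

lemma nn_integral_Y_square:
  "(\<integral>\<^sup>+\<omega>. ennreal ((real (Y t \<omega>))\<^sup>2) \<partial>M)
     = (\<integral>\<^sup>+\<omega>. ennreal ((L t \<omega>)\<^sup>2 + (L t \<omega> + (L t \<omega>)\<^sup>2 / r)) \<partial>M)"
  using nn_integral_comp_Y[of "\<lambda>k \<omega>. ennreal ((real k)\<^sup>2)" t]
  by (simp add: nn_integral_nb_mean_pmf_square r_pos L_nonneg cong: nn_integral_cong)

lemma nn_integral_Y_square_finite:
  assumes "(\<integral>\<^sup>+\<omega>. ennreal ((L t \<omega>)\<^sup>2) \<partial>M) < \<infinity>"
  shows "(\<integral>\<^sup>+\<omega>. ennreal ((real (Y t \<omega>))\<^sup>2) \<partial>M) < \<infinity>"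
proof -
  have "(\<integral>\<^sup>+\<omega>. ennreal ((real (Y t \<omega>))\<^sup>2) \<partial>M) \<le> (\<integral>\<^sup>+\<omega>. 1 + 3 * ennreal ((L t \<omega>)\<^sup>2) \<partial>M)"
    unfolding nn_integral_Y_square
  proof (intro nn_integral_mono)
    fix \<omega> assume "\<omega> \<in> space M"
    define l where "l = L t \<omega>"
    have "0 \<le> l" using L_nonneg \<open>\<omega> \<in> space M\<close> by (simp add: l_def)
    have "0 \<le> (l - 1)\<^sup>2"
      by simp
    then have "l \<le> 1 + l\<^sup>2"
      using \<open>0 \<le> l\<close> by (simp add: power2_diff)
    moreover have "l\<^sup>2 / r \<le> l\<^sup>2"
      using r_pos by (simp add: divide_le_eq mult_le_cancel_left1)
    ultimately have "l\<^sup>2 + (l + l\<^sup>2 / r) \<le> 1 + 3 * l\<^sup>2"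
      by simp
    then have "ennreal (l\<^sup>2 + (l + l\<^sup>2 / r)) \<le> ennreal (1 + 3 * l\<^sup>2)"
      by (rule ennreal_leI)
    then show "ennreal ((L t \<omega>)\<^sup>2 + (L t \<omega> + (L t \<omega>)\<^sup>2 / r)) \<le> 1 + 3 * ennreal ((L t \<omega>)\<^sup>2)"
      by (simp add: l_def ennreal_mult)
  qed
  also have "\<dots> < \<infinity>"
    using assms by (simp add: nn_integral_add nn_integral_cmult emeasure_space_1 ennreal_mult_less_top)
  finally show ?thesis .
qed

end

locale nb_linear_intensity = nb_count_process +
  fixes c a b :: real
  assumes c_nonneg: "0 \<le> c" and a_nonneg: "0 \<le> a" and b_nonneg: "0 \<le> b"
    and L_Suc_le: "\<And>t \<omega>. \<omega> \<in> space M \<Longrightarrow> L (t + 1) \<omega> \<le> c + a * real (Y t \<omega>) + b * L t \<omega>"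
begin

text \<open>The conditional second moment of \<open>c + b \<lambda> + a Y\<close> given the past is \<open>c\<^sup>2 + \<delta> \<lambda> + \<rho> \<lambda>\<^sup>2\<close>.\<close>

definition \<rho> :: real where "\<rho> = (a + b)\<^sup>2 + a\<^sup>2 / r"

definition \<delta> :: real where "\<delta> = 2 * c * (a + b) + a\<^sup>2"

lemma \<rho>_nonneg: "0 \<le> \<rho>" and \<delta>_nonneg: "0 \<le> \<delta>"
  using a_nonneg b_nonneg c_nonneg by (simp_all add: \<rho>_def \<delta>_def)

lemma nn_integral_indicator_L_Suc_le:
  fixes g :: "real \<Rightarrow> real"
  assumes A: "A \<in> sets (past_sigma M Y t)"
    and g: "mono_on {0..} g" "g \<in> borel_measurable borel"
  shows "(\<integral>\<^sup>+\<omega>. indicator A \<omega> * ennreal (g (L (t + 1) \<omega>)) \<partial>M)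
       \<le> (\<integral>\<^sup>+\<omega>. indicator A \<omega> * (\<integral>\<^sup>+k. ennreal (g (c + b * L t \<omega> + a * real k)) \<partial>nb_mean_pmf r (L t \<omega>)) \<partial>M)"
proof -
  have H: "(\<lambda>\<omega>. indicator A \<omega> * ennreal (g (c + b * L t \<omega> + a * real k))) \<in> borel_measurable (past_sigma M Y t)"
    for k
  proof -
    have "(\<lambda>\<omega>. g (c + b * L t \<omega> + a * real k)) \<in> borel_measurable (past_sigma M Y t)"
      by (rule measurable_compose[OF _ g(2)]) (use L_past[of t] in measurable)
    then show ?thesis
      using A by measurable
  qed
  have "(\<integral>\<^sup>+\<omega>. indicator A \<omega> * ennreal (g (L (t + 1) \<omega>)) \<partial>M)
      \<le> (\<integral>\<^sup>+\<omega>. indicator A \<omega> * ennreal (g (c + b * L t \<omega> + a * real (Y t \<omega>))) \<partial>M)"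
  proof (intro nn_integral_mono mult_left_mono ennreal_leI)
    fix \<omega> assume "\<omega> \<in> space M"
    then show "g (L (t + 1) \<omega>) \<le> g (c + b * L t \<omega> + a * real (Y t \<omega>))"
      using L_Suc_le[of \<omega> t] L_nonneg[of \<omega>] a_nonneg b_nonneg c_nonneg
      by (intro mono_onD[OF g(1)]) (auto simp: algebra_simps)
  qed simp
  also have "\<dots> = (\<integral>\<^sup>+\<omega>. (\<integral>\<^sup>+k. indicator A \<omega> * ennreal (g (c + b * L t \<omega> + a * real k)) \<partial>nb_mean_pmf r (L t \<omega>)) \<partial>M)"
    using H by (rule nn_integral_comp_Y)
  also have "\<dots> = (\<integral>\<^sup>+\<omega>. indicator A \<omega> * (\<integral>\<^sup>+k. ennreal (g (c + b * L t \<omega> + a * real k)) \<partial>nb_mean_pmf r (L t \<omega>)) \<partial>M)"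
    by (simp add: nn_integral_cmult)
  finally show ?thesis .
qed

lemma nn_integral_indicator_L_Suc_le_mean:
  assumes A: "A \<in> sets (past_sigma M Y t)"
  shows "(\<integral>\<^sup>+\<omega>. indicator A \<omega> * ennreal (L (t + 1) \<omega>) \<partial>M)
       \<le> ennreal c + ennreal (a + b) * (\<integral>\<^sup>+\<omega>. indicator A \<omega> * ennreal (L t \<omega>) \<partial>M)"
proof -
  have AM: "A \<in> sets M" using sets_past_sigma_subset[OF A] .
  have "(\<integral>\<^sup>+\<omega>. indicator A \<omega> * ennreal (L (t + 1) \<omega>) \<partial>M)
      \<le> (\<integral>\<^sup>+\<omega>. indicator A \<omega> * (\<integral>\<^sup>+k. ennreal (c + b * L t \<omega> + a * real k) \<partial>nb_mean_pmf r (L t \<omega>)) \<partial>M)"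
    using nn_integral_indicator_L_Suc_le[OF A, of "\<lambda>x. x"] by (simp add: mono_on_def)
  also have "\<dots> = (\<integral>\<^sup>+\<omega>. ennreal c * indicator A \<omega> + ennreal (a + b) * (indicator A \<omega> * ennreal (L t \<omega>)) \<partial>M)"
  proof (rule nn_integral_cong)
    fix \<omega> assume "\<omega> \<in> space M"
    then have l: "0 \<le> L t \<omega>" by (rule L_nonneg)
    have "(\<integral>\<^sup>+k. ennreal (c + b * L t \<omega> + a * real k) \<partial>nb_mean_pmf r (L t \<omega>)) = ennreal (c + b * L t \<omega> + a * L t \<omega>)"
      using l b_nonneg c_nonneg by (intro nn_integral_nb_mean_pmf_affine r_pos a_nonneg) simp_all
    also have "c + b * L t \<omega> + a * L t \<omega> = c + (a + b) * L t \<omega>"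
      by (simp add: algebra_simps)
    finally have "(\<integral>\<^sup>+k. ennreal (c + b * L t \<omega> + a * real k) \<partial>nb_mean_pmf r (L t \<omega>)) = ennreal (c + (a + b) * L t \<omega>)" .
    then show "indicator A \<omega> * (\<integral>\<^sup>+k. ennreal (c + b * L t \<omega> + a * real k) \<partial>nb_mean_pmf r (L t \<omega>))
        = ennreal c * indicator A \<omega> + ennreal (a + b) * (indicator A \<omega> * ennreal (L t \<omega>))"
      using l a_nonneg b_nonneg c_nonneg by (simp add: ennreal_mult split: split_indicator)
  qed
  also have "\<dots> = ennreal c * emeasure M A + ennreal (a + b) * (\<integral>\<^sup>+\<omega>. indicator A \<omega> * ennreal (L t \<omega>) \<partial>M)"
    using AM by (simp add: nn_integral_add nn_integral_cmult nn_integral_cmult_indicator)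
  also have "\<dots> \<le> ennreal c + ennreal (a + b) * (\<integral>\<^sup>+\<omega>. indicator A \<omega> * ennreal (L t \<omega>) \<partial>M)"
    using emeasure_le_1 by (intro add_right_mono) (simp add: mult_left_le)
  finally show ?thesis .
qed

lemma nn_integral_indicator_L_Suc_le_square:
  assumes A: "A \<in> sets (past_sigma M Y t)"
  shows "(\<integral>\<^sup>+\<omega>. indicator A \<omega> * ennreal ((L (t + 1) \<omega>)\<^sup>2) \<partial>M)
       \<le> ennreal (c\<^sup>2) + ennreal \<delta> * (\<integral>\<^sup>+\<omega>. indicator A \<omega> * ennreal (L t \<omega>) \<partial>M)
          + ennreal \<rho> * (\<integral>\<^sup>+\<omega>. indicator A \<omega> * ennreal ((L t \<omega>)\<^sup>2) \<partial>M)"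
proof -
  have AM: "A \<in> sets M" using sets_past_sigma_subset[OF A] .
  have "(\<integral>\<^sup>+\<omega>. indicator A \<omega> * ennreal ((L (t + 1) \<omega>)\<^sup>2) \<partial>M)
      \<le> (\<integral>\<^sup>+\<omega>. indicator A \<omega> * (\<integral>\<^sup>+k. ennreal ((c + b * L t \<omega> + a * real k)\<^sup>2) \<partial>nb_mean_pmf r (L t \<omega>)) \<partial>M)"
    using nn_integral_indicator_L_Suc_le[OF A, of "\<lambda>x. x\<^sup>2"] by (simp add: mono_on_def power_mono)
  also have "\<dots> = (\<integral>\<^sup>+\<omega>. ennreal (c\<^sup>2) * indicator A \<omega> + ennreal \<delta> * (indicator A \<omega> * ennreal (L t \<omega>))
        + ennreal \<rho> * (indicator A \<omega> * ennreal ((L t \<omega>)\<^sup>2)) \<partial>M)"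
  proof (rule nn_integral_cong)
    fix \<omega> assume "\<omega> \<in> space M"
    then have l: "0 \<le> L t \<omega>" by (rule L_nonneg)
    have "(c + b * L t \<omega> + a * L t \<omega>)\<^sup>2 + a\<^sup>2 * (L t \<omega> + (L t \<omega>)\<^sup>2 / r) = c\<^sup>2 + \<delta> * L t \<omega> + \<rho> * (L t \<omega>)\<^sup>2"
      by (simp add: \<rho>_def \<delta>_def power2_eq_square algebra_simps add_divide_distrib)
    moreover have "(\<integral>\<^sup>+k. ennreal ((c + b * L t \<omega> + a * real k)\<^sup>2) \<partial>nb_mean_pmf r (L t \<omega>))
        = ennreal ((c + b * L t \<omega> + a * L t \<omega>)\<^sup>2 + a\<^sup>2 * (L t \<omega> + (L t \<omega>)\<^sup>2 / r))"
      using l b_nonneg c_nonneg by (intro nn_integral_nb_mean_pmf_affine_square r_pos a_nonneg) simp_all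
    ultimately have "(\<integral>\<^sup>+k. ennreal ((c + b * L t \<omega> + a * real k)\<^sup>2) \<partial>nb_mean_pmf r (L t \<omega>))
        = ennreal (c\<^sup>2 + \<delta> * L t \<omega> + \<rho> * (L t \<omega>)\<^sup>2)"
      by simp
    then show "indicator A \<omega> * (\<integral>\<^sup>+k. ennreal ((c + b * L t \<omega> + a * real k)\<^sup>2) \<partial>nb_mean_pmf r (L t \<omega>))
        = ennreal (c\<^sup>2) * indicator A \<omega> + ennreal \<delta> * (indicator A \<omega> * ennreal (L t \<omega>))
          + ennreal \<rho> * (indicator A \<omega> * ennreal ((L t \<omega>)\<^sup>2))"
      using l \<rho>_nonneg \<delta>_nonneg by (simp add: ennreal_mult split: split_indicator)
  qed
  also have "\<dots> = ennreal (c\<^sup>2) * emeasure M A + ennreal \<delta> * (\<integral>\<^sup>+\<omega>. indicator A \<omega> * ennreal (L t \<omega>) \<partial>M)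
        + ennreal \<rho> * (\<integral>\<^sup>+\<omega>. indicator A \<omega> * ennreal ((L t \<omega>)\<^sup>2) \<partial>M)"
    using AM by (simp add: nn_integral_add nn_integral_cmult nn_integral_cmult_indicator)
  also have "\<dots> \<le> ennreal (c\<^sup>2) + ennreal \<delta> * (\<integral>\<^sup>+\<omega>. indicator A \<omega> * ennreal (L t \<omega>) \<partial>M)
        + ennreal \<rho> * (\<integral>\<^sup>+\<omega>. indicator A \<omega> * ennreal ((L t \<omega>)\<^sup>2) \<partial>M)"
    using emeasure_le_1 by (intro add_right_mono) (simp add: mult_left_le)
  finally show ?thesis .
qed

lemma nn_integral_indicator_L_square_le:
  assumes R: "0 \<le> R" and q: "a + b \<le> q" "\<rho> < q" "q < 1"
  shows "(\<integral>\<^sup>+\<omega>. indicator {\<omega> \<in> space M. L s \<omega> \<le> R} \<omega> * ennreal ((L (s + int n) \<omega>)\<^sup>2) \<partial>M)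
       \<le> ennreal (q ^ n * (R\<^sup>2 + \<delta> * R / (q - \<rho>)) + (c\<^sup>2 + \<delta> * (c / (1 - (a + b)))) / (1 - \<rho>))"
proof -
  let ?A = "{\<omega> \<in> space M. L s \<omega> \<le> R}"
  have "{\<omega> \<in> space (past_sigma M Y s). L s \<omega> \<le> R} \<in> sets (past_sigma M Y s)"
    using L_past[of s] by measurable
  then have A: "?A \<in> sets (past_sigma M Y (s + int j))" for j
    using sets_past_sigma_mono[of s "s + int j"] by auto
  have AM: "?A \<in> sets M"
    by measurable
  have init: "(\<integral>\<^sup>+\<omega>. indicator ?A \<omega> * ennreal (g (L s \<omega>)) \<partial>M) \<le> ennreal (g R)"
    if "mono_on {0..} g" for g :: "real \<Rightarrow> real"
  proof -
    have "(\<integral>\<^sup>+\<omega>. indicator ?A \<omega> * ennreal (g (L s \<omega>)) \<partial>M) \<le> (\<integral>\<^sup>+\<omega>. ennreal (g R) * indicator ?A \<omega> \<partial>M)"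
      using L_nonneg R by (intro nn_integral_mono) (auto intro!: ennreal_leI mono_onD[OF that] split: split_indicator)
    also have "\<dots> \<le> ennreal (g R)"
      using AM emeasure_le_1 by (simp add: nn_integral_cmult_indicator mult_left_le)
    finally show ?thesis .
  qed
  have Suc_eq: "s + int (Suc j) = s + int j + 1" for j
    by simp
  show ?thesis
  proof (rule ennreal_two_moment_recursion_le)
    show "(\<integral>\<^sup>+\<omega>. indicator ?A \<omega> * ennreal (L (s + int 0) \<omega>) \<partial>M) \<le> ennreal R"
      using init[of "\<lambda>x. x"] by (simp add: mono_on_def)
    show "(\<integral>\<^sup>+\<omega>. indicator ?A \<omega> * ennreal ((L (s + int 0) \<omega>)\<^sup>2) \<partial>M) \<le> ennreal (R\<^sup>2)"
      using init[of "\<lambda>x. x\<^sup>2"] by (simp add: mono_on_def power_mono)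
    fix j
    show "(\<integral>\<^sup>+\<omega>. indicator ?A \<omega> * ennreal (L (s + int (Suc j)) \<omega>) \<partial>M)
        \<le> ennreal c + ennreal (a + b) * (\<integral>\<^sup>+\<omega>. indicator ?A \<omega> * ennreal (L (s + int j) \<omega>) \<partial>M)"
      unfolding Suc_eq by (rule nn_integral_indicator_L_Suc_le_mean[OF A])
    show "(\<integral>\<^sup>+\<omega>. indicator ?A \<omega> * ennreal ((L (s + int (Suc j)) \<omega>)\<^sup>2) \<partial>M)
        \<le> ennreal (c\<^sup>2) + ennreal \<delta> * (\<integral>\<^sup>+\<omega>. indicator ?A \<omega> * ennreal (L (s + int j) \<omega>) \<partial>M)
          + ennreal \<rho> * (\<integral>\<^sup>+\<omega>. indicator ?A \<omega> * ennreal ((L (s + int j) \<omega>)\<^sup>2) \<partial>M)"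
      unfolding Suc_eq by (rule nn_integral_indicator_L_Suc_le_square[OF A])
  qed (use R q c_nonneg a_nonneg b_nonneg \<rho>_nonneg \<delta>_nonneg in simp_all)
qed

lemma nn_integral_L_square_finite:
  assumes ab: "a + b < 1" and \<rho>: "\<rho> < 1"
    and same_distr: "\<And>t. distr M borel (L t) = distr M borel (L 0)"
  shows "(\<integral>\<^sup>+\<omega>. ennreal ((L t \<omega>)\<^sup>2) \<partial>M) < \<infinity>"
proof -
  define q where "q = max (a + b) ((1 + \<rho>) / 2)"
  have q: "a + b \<le> q" "\<rho> < q" "q < 1" "0 \<le> q"
    using ab \<rho> a_nonneg b_nonneg by (auto simp: q_def less_max_iff_disj)
  define C where "C = (c\<^sup>2 + \<delta> * (c / (1 - (a + b)))) / (1 - \<rho>)"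
  interpret L0: real_distribution "distr M borel (L 0)"
    by simp
  have "(\<integral>\<^sup>+\<omega>. ennreal ((L t \<omega>)\<^sup>2) \<partial>M) \<le> ennreal (1 + C) + 1"
  proof (rule nn_integral_le_if_bounded_off_small_sets)
    fix \<epsilon> :: real assume "0 < \<epsilon>"
    have "\<forall>\<^sub>F R in at_top. measure (distr M borel (L 0)) {R<..} < \<epsilon>"
      using order_tendstoD(2)[OF L0.measure_greaterThan_tendsto_0 \<open>0 < \<epsilon>\<close>] .
    then obtain R0 where R0: "\<And>R. R0 \<le> R \<Longrightarrow> measure (distr M borel (L 0)) {R<..} < \<epsilon>"
      by (auto simp: eventually_at_top_linorder)
    define R where "R = max R0 0"
    have R: "0 \<le> R" "measure (distr M borel (L 0)) {R<..} < \<epsilon>"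
      using R0[of R] by (simp_all add: R_def)
    have "(\<lambda>n. q ^ n * (R\<^sup>2 + \<delta> * R / (q - \<rho>))) \<longlonglongrightarrow> 0"
      using q by (intro tendsto_mult_left_zero LIMSEQ_power_zero) simp
    from order_tendstoD(2)[OF this zero_less_one]
    obtain n where n: "q ^ n * (R\<^sup>2 + \<delta> * R / (q - \<rho>)) < 1"
      by (auto simp: eventually_sequentially)
    let ?A = "{\<omega> \<in> space M. L (t - int n) \<omega> \<le> R}"
    have "?A \<in> sets M"
      by measurable
    have "space M - ?A = L (t - int n) -` {R<..} \<inter> space M"
      by auto
    then have "prob (space M - ?A) = measure (distr M borel (L (t - int n))) {R<..}"
      by (simp add: measure_distr)
    with R have "prob (space M - ?A) < \<epsilon>"
      by (simp only: same_distr[of "t - int n"])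
    moreover have "(\<integral>\<^sup>+\<omega>. indicator ?A \<omega> * ennreal ((L t \<omega>)\<^sup>2) \<partial>M)
        \<le> ennreal (q ^ n * (R\<^sup>2 + \<delta> * R / (q - \<rho>)) + C)"
      using nn_integral_indicator_L_square_le[OF R(1) q(1-3), of "t - int n" n] by (simp add: C_def)
    moreover have "ennreal (q ^ n * (R\<^sup>2 + \<delta> * R / (q - \<rho>)) + C) \<le> ennreal (1 + C)"
      using n by (intro ennreal_leI) simp
    ultimately show "\<exists>A\<in>sets M. prob (space M - A) < \<epsilon> \<and>
        (\<integral>\<^sup>+\<omega>. indicator A \<omega> * ennreal ((L t \<omega>)\<^sup>2) \<partial>M) \<le> ennreal (1 + C)"
      using \<open>?A \<in> sets M\<close> order_trans by blast
  qed simp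
  also have "\<dots> < \<infinity>"
    by simp
  finally show ?thesis .
qed

end

theorem proposition2:
  fixes M :: "'a measure"
    and r :: nat
    and \<Theta> :: "'p::topological_space set"
    and \<theta>s :: 'p
    and f :: "'p \<Rightarrow> nat \<Rightarrow> real \<Rightarrow> real"
    and a b :: real
    and Y :: "int \<Rightarrow> 'a \<Rightarrow> nat"
    and L :: "int \<Rightarrow> 'a \<Rightarrow> real"
  assumes "prob_space M"
    and "r \<ge> 1"
    and "compact \<Theta>" and "\<theta>s \<in> \<Theta>"
    and f_meas: "\<And>\<theta>. \<theta> \<in> \<Theta> \<Longrightarrow>
         (\<lambda>(y, l). f \<theta> y l) \<in> borel_measurable
            (restrict_space (count_space UNIV \<Otimes>\<^sub>M borel) (UNIV \<times> {0..}))"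
    and f_nonneg: "\<And>\<theta> y l. \<theta> \<in> \<Theta> \<Longrightarrow> l \<ge> 0 \<Longrightarrow> f \<theta> y l \<ge> 0"
    and "a \<ge> 0" and "b \<ge> 0" and "a + b < 1"
    and contr: "\<And>\<theta> y l y' l'. \<theta> \<in> \<Theta> \<Longrightarrow> l \<ge> 0 \<Longrightarrow> l' \<ge> 0 \<Longrightarrow>
         \<bar>f \<theta> y l - f \<theta> y' l'\<bar> \<le> a * \<bar>real y - real y'\<bar> + b * \<bar>l - l'\<bar>"
    and Y_meas: "\<And>t. Y t \<in> measurable M (count_space UNIV)"
    and L_meas: "\<And>t. L t \<in> borel_measurable M"
    and L_nonneg: "\<And>t \<omega>. \<omega> \<in> space M \<Longrightarrow> L t \<omega> \<ge> 0"
    and L_rec: "\<And>t \<omega>. \<omega> \<in> space M \<Longrightarrow> L t \<omega> = f \<theta>s (Y (t - 1) \<omega>) (L (t - 1) \<omega>)"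
    and L_past: "\<And>t. L t \<in> borel_measurable (past_sigma M Y t)"
    and cond_NB: "\<And>t k A. A \<in> sets (past_sigma M Y t) \<Longrightarrow>
         measure M ({\<omega> \<in> space M. Y t \<omega> = k} \<inter> A)
           = (\<integral>\<omega>. indicator A \<omega> * pmf (neg_binomial_pmf r (nb_prob r (L t \<omega>))) k \<partial>M)"
    and "strictly_stationary M Y L"
    and "(a + b)\<^sup>2 + a\<^sup>2 / real r < 1"
  shows "\<forall>t. (\<integral>\<^sup>+ \<omega>. ennreal ((real (Y t \<omega>))\<^sup>2) \<partial>M) < \<infinity>"
proof -
  have process: "nb_count_process M Y L r"
    using \<open>prob_space M\<close> \<open>r \<ge> 1\<close> Y_meas L_nonneg L_past cond_NB
    by (simp add: nb_count_process_def nb_count_process_axioms_def)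
  \<comment> \<open>only the Lipschitz bound at \<open>\<theta>s\<close> against \<open>(0, 0)\<close> is needed, not compactness or measurability\<close>
  have L_Suc_le: "L (t + 1) \<omega> \<le> f \<theta>s 0 0 + a * real (Y t \<omega>) + b * L t \<omega>" if "\<omega> \<in> space M" for t \<omega>
    using L_rec[OF that, of "t + 1"] L_nonneg[OF that, of t]
      contr[OF \<open>\<theta>s \<in> \<Theta>\<close> L_nonneg[OF that, of t] order_refl, of "Y t \<omega>" 0]
    by simp
  interpret nb_linear_intensity M Y L r "f \<theta>s 0 0" a b
    using process f_nonneg[OF \<open>\<theta>s \<in> \<Theta>\<close>, of 0 0] \<open>0 \<le> a\<close> \<open>0 \<le> b\<close> L_Suc_le
    by (simp add: nb_linear_intensity_def nb_linear_intensity_axioms_def)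
  have same_distr: "distr M borel (L t) = distr M borel (L 0)" for t
    using strictly_stationary_distr_eq[OF \<open>strictly_stationary M Y L\<close> Y_meas L_meas] .
  have "(\<integral>\<^sup>+\<omega>. ennreal ((L t \<omega>)\<^sup>2) \<partial>M) < \<infinity>" for t
    using \<open>a + b < 1\<close> \<open>(a + b)\<^sup>2 + a\<^sup>2 / real r < 1\<close>
    by (intro nn_integral_L_square_finite[OF _ _ same_distr]) (simp_all add: \<rho>_def)
  then show ?thesis
    using nn_integral_Y_square_finite by blast
qed

end
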